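(* Let $W_1,\dots,W_N\in\{1,-1\}$ with both values occurring, let $\mathbf{K}_\phi\in\mathbb{R}^{N\times N}$ be the matrix $[\mathbf{K}_\phi]_{ij}=W_iW_j\langle\phi(\mathbf{X}_i),\phi(\mathbf{X}_j)\rangle$ for some feature map $\phi$ into a Hilbert space, and suppose $\mathbf{K}_\phi$ has full rank. Let $\lambda\ge 0$ be such that an optimal solution of $$\min_{\boldsymbol{\alpha}}\ \boldsymbol{\alpha}^\top\mathbf{K}_\phi\boldsymbol{\alpha}-2\lambda\mathbf{1}^\top\boldsymbol{\alpha}\quad\text{s.t.}\quad \mathbf{W}^\top\boldsymbol{\alpha}=0,\ \mathbf{0}\preceq\boldsymbol{\alpha}\preceq\mathbf{1}$$ is an optimal solution of $\min_{\boldsymbol{\alpha}\in\mathcal{A}}\boldsymbol{\alpha}^\top\mathbf{K}_\phi\boldsymbol{\alpha}$, where $\mathcal{A}=\{\boldsymbol{\alpha}:\mathbf{0}\preceq\boldsymbol{\alpha}\preceq\mathbf{1},\ \sum_{i:W_i=1}\alpha_i=\sum_{i:W_i=-1}\alpha_i=1\}$. Then $\lambda>0$.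
   Context: $\preceq$ denotes entrywise inequality, $\mathbf{W}=(W_1,\dots,W_N)^\top$, $\mathbf{1}$ the all-ones vector. $W_i=1$ indicates a treated unit and $W_i=-1$ a control unit. *)

theory Defs
  imports "HOL-Analysis.Analysis"
begin

definition Kphi :: "('n::finite \<Rightarrow> real) \<Rightarrow> ('n \<Rightarrow> 'h::real_inner) \<Rightarrow> real^'n^'n" where
  "Kphi W F = (\<chi> i j. W i * W j * inner (F i) (F j))"

definition box01 :: "real^'n \<Rightarrow> bool" where
  "box01 a \<longleftrightarrow> (\<forall>i. 0 \<le> a $ i \<and> a $ i \<le> 1)"

definition feas_pen :: "('n::finite \<Rightarrow> real) \<Rightarrow> (real^'n) set" where
  "feas_pen W = {a. (\<Sum>i\<in>UNIV. W i * a $ i) = 0 \<and> box01 a}"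

definition obj_pen :: "real^'n^'n \<Rightarrow> real \<Rightarrow> real^'n \<Rightarrow> real" where
  "obj_pen K lam a = a \<bullet> (K *v a) - 2 * lam * (\<Sum>i\<in>UNIV. a $ i)"

definition setA :: "('n::finite \<Rightarrow> real) \<Rightarrow> (real^'n) set" where
  "setA W = {a. box01 a \<and> (\<Sum>i\<in>{i. W i = 1}. a $ i) = 1 \<and> (\<Sum>i\<in>{i. W i = -1}. a $ i) = 1}"

definition is_minimizer :: "('a \<Rightarrow> real) \<Rightarrow> 'a set \<Rightarrow> 'a \<Rightarrow> bool" where
  "is_minimizer f S x \<longleftrightarrow> x \<in> S \<and> (\<forall>y\<in>S. f x \<le> f y)"

end

theory Submission
  imports Defs
begin

text \<open>For \<open>\<lambda> = 0\<close> the penalized objective is the quadratic form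
  \<open>\<alpha>\<^sup>T K \<alpha> = \<parallel>\<Sum>\<^sub>j W\<^sub>j \<alpha>\<^sub>j \<phi>(X\<^sub>j)\<parallel>\<^sup>2\<close>, which is nonnegative and vanishes at the
  feasible point \<open>0\<close>. A minimizer \<open>\<alpha>\<close> therefore makes the feature combination vanish, hence
  \<open>K \<alpha> = 0\<close>, and full rank forces \<open>\<alpha> = 0\<close>, which does not lie in \<open>\<A>\<close>.\<close>

definition signed_feature_sum :: "('n::finite \<Rightarrow> real) \<Rightarrow> ('n \<Rightarrow> 'h::real_vector) \<Rightarrow> real^'n \<Rightarrow> 'h"
  where "signed_feature_sum W F a = (\<Sum>j\<in>UNIV. (W j * a $ j) *\<^sub>R F j)"

lemma Kphi_mult_vector:
  "(Kphi W F *v a) $ i = W i * inner (F i) (signed_feature_sum W F a)"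
  by (simp add: Kphi_def signed_feature_sum_def matrix_vector_mult_def inner_sum_right
      sum_distrib_left mult_ac)

lemma Kphi_quadratic_form:
  "a \<bullet> (Kphi W F *v a) = (norm (signed_feature_sum W F a))\<^sup>2"
  unfolding power2_norm_eq_inner
  by (simp add: inner_vec_def Kphi_mult_vector signed_feature_sum_def inner_sum_left
      sum_distrib_left mult.assoc mult.left_commute)

lemma Kphi_quadratic_form_nonneg: "0 \<le> a \<bullet> (Kphi W F *v a)"
  by (simp add: Kphi_quadratic_form)

lemma Kphi_mult_vector_eq_0_iff:
  "Kphi W F *v a = 0 \<longleftrightarrow> a \<bullet> (Kphi W F *v a) = 0"
proof
  assume "a \<bullet> (Kphi W F *v a) = 0"
  then have "signed_feature_sum W F a = 0"
    by (simp add: Kphi_quadratic_form)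
  then show "Kphi W F *v a = 0"
    by (simp add: vec_eq_iff Kphi_mult_vector)
qed simp

lemma full_rank_mult_vector_eq_0:
  fixes A :: "real^'n^'n"
  assumes "rank A = CARD('n)" and "A *v x = 0"
  shows "x = 0"
  using full_rank_injective[of A] assms by (metis injD matrix_vector_mult_0_right)

lemma zero_in_feas_pen: "0 \<in> feas_pen W"
  by (simp add: feas_pen_def box01_def)

lemma zero_notin_setA: "0 \<notin> setA W"
  by (simp add: setA_def)

lemma minimizer_obj_pen_0_quadratic_form:
  assumes "is_minimizer (obj_pen (Kphi W F) 0) (feas_pen W) a"
  shows "a \<bullet> (Kphi W F *v a) = 0"
proof -
  have "obj_pen (Kphi W F) 0 a \<le> obj_pen (Kphi W F) 0 0"
    using assms zero_in_feas_pen unfolding is_minimizer_def by blast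
  then have "a \<bullet> (Kphi W F *v a) \<le> 0"
    by (simp add: obj_pen_def)
  with Kphi_quadratic_form_nonneg[of a W F] show ?thesis
    by linarith
qed

theorem lemma1:
  fixes W :: "'n::finite \<Rightarrow> real"
    and X :: "'n \<Rightarrow> 'x"
    and \<phi> :: "'x \<Rightarrow> 'h::{real_inner, complete_space}"
    and lam :: real
  assumes W_vals: "\<forall>i. W i = 1 \<or> W i = -1"
    and treated: "\<exists>i. W i = 1"
    and control: "\<exists>i. W i = -1"
    and full_rank: "rank (Kphi W (\<lambda>i. \<phi> (X i))) = CARD('n)"
    and lam_nonneg: "lam \<ge> 0"
    and opt: "\<exists>a. is_minimizer (obj_pen (Kphi W (\<lambda>i. \<phi> (X i))) lam) (feas_pen W) a
               \<and> is_minimizer (\<lambda>b. b \<bullet> (Kphi W (\<lambda>i. \<phi> (X i)) *v b)) (setA W) a"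
  shows "lam > 0"
proof (rule ccontr)
  assume "\<not> lam > 0"
  with lam_nonneg have "lam = 0" by simp
  define K where "K = Kphi W (\<lambda>i. \<phi> (X i))"
  obtain a where pen_min: "is_minimizer (obj_pen K 0) (feas_pen W) a"
    and A_min: "is_minimizer (\<lambda>b. b \<bullet> (K *v b)) (setA W) a"
    using opt \<open>lam = 0\<close> unfolding K_def by blast
  have "K *v a = 0"
    using minimizer_obj_pen_0_quadratic_form[OF pen_min[unfolded K_def]]
    by (simp add: K_def Kphi_mult_vector_eq_0_iff)
  then have "a = 0"
    using full_rank full_rank_mult_vector_eq_0 unfolding K_def by blast
  moreover have "a \<in> setA W"
    using A_min by (simp add: is_minimizer_def)
  ultimately show False
    using zero_notin_setA by blast
qed

end
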